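(* Let $I$ be a fuzzy implication and $N$ a strong fuzzy negation. Define $$I^{lc}_{I,N}(x,y)=\begin{cases}I(x,y)& y\ge N(x)\\ I(N(y),N(x))&\text{otherwise}\end{cases},\qquad I^{uc}_{I,N}(x,y)=\begin{cases}I(x,y)& y\le N(x)\\ I(N(y),N(x))&\text{otherwise}\end{cases},$$ and for a fuzzy implication $J$ let $A_J(a,b)=\inf\{c\in[0,1]\mid J(a,c)\ge b\}$. Then $A_{I^{lc}_{I,N}}(N(b),I^{lc}_{I,N}(a,b))\le N(a)$ and $A_{I^{uc}_{I,N}}(N(b),I^{uc}_{I,N}(a,b))\le N(a)$ for all $a,b\in[0,1]$.
   Context: A fuzzy implication is $I:[0,1]^2\to[0,1]$, non-increasing in the first and non-decreasing in the second variable, with $I(0,0)=I(1,1)=1$ and $I(1,0)=0$. A fuzzy negation is a non-increasing $N:[0,1]\to[0,1]$ with $N(0)=1$, $N(1)=0$; it is strong if $N(N(x))=x$ for all $x$. *)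

theory Defs
  imports Complex_Main
begin

definition fuzzy_implication :: "(real \<Rightarrow> real \<Rightarrow> real) \<Rightarrow> bool" where
  "fuzzy_implication I \<longleftrightarrow>
     (\<forall>x\<in>{0..1}. \<forall>y\<in>{0..1}. I x y \<in> {0..1}) \<and>
     (\<forall>x1\<in>{0..1}. \<forall>x2\<in>{0..1}. \<forall>y\<in>{0..1}. x1 \<le> x2 \<longrightarrow> I x2 y \<le> I x1 y) \<and>
     (\<forall>x\<in>{0..1}. \<forall>y1\<in>{0..1}. \<forall>y2\<in>{0..1}. y1 \<le> y2 \<longrightarrow> I x y1 \<le> I x y2) \<and>
     I 0 0 = 1 \<and> I 1 1 = 1 \<and> I 1 0 = 0"

definition fuzzy_negation :: "(real \<Rightarrow> real) \<Rightarrow> bool" where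
  "fuzzy_negation N \<longleftrightarrow>
     (\<forall>x\<in>{0..1}. N x \<in> {0..1}) \<and>
     (\<forall>x\<in>{0..1}. \<forall>y\<in>{0..1}. x \<le> y \<longrightarrow> N y \<le> N x) \<and>
     N 0 = 1 \<and> N 1 = 0"

definition strong_negation :: "(real \<Rightarrow> real) \<Rightarrow> bool" where
  "strong_negation N \<longleftrightarrow> fuzzy_negation N \<and> (\<forall>x\<in>{0..1}. N (N x) = x)"

definition I_lc :: "(real \<Rightarrow> real \<Rightarrow> real) \<Rightarrow> (real \<Rightarrow> real) \<Rightarrow> real \<Rightarrow> real \<Rightarrow> real" where
  "I_lc I N x y = (if y \<ge> N x then I x y else I (N y) (N x))"

definition I_uc :: "(real \<Rightarrow> real \<Rightarrow> real) \<Rightarrow> (real \<Rightarrow> real) \<Rightarrow> real \<Rightarrow> real \<Rightarrow> real" where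
  "I_uc I N x y = (if y \<le> N x then I x y else I (N y) (N x))"

definition A_op :: "(real \<Rightarrow> real \<Rightarrow> real) \<Rightarrow> real \<Rightarrow> real \<Rightarrow> real" where
  "A_op J a b = Inf {c \<in> {0..1}. J a c \<ge> b}"

end

theory Submission
  imports Defs
begin

text \<open>Both operators are contrapositive with respect to the strong negation N, i.e.
  J (N b) (N a) = J a b. Hence N a itself lies in the set whose infimum defines
  A_J (N b) (J a b).\<close>

lemma A_op_le:
  assumes "c \<in> {0..1}" and "b \<le> J a c"
  shows "A_op J a b \<le> c"
  unfolding A_op_def
proof (rule cInf_lower)
  show "bdd_below {c \<in> {0..1}. b \<le> J a c}"
    by (rule bdd_belowI[where m = 0]) auto
qed (use assms in auto)

lemma A_op_contrapositive_le:
  assumes "J (N b) (N a) = J a b" and "N a \<in> {0..1}"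
  shows "A_op J (N b) (J a b) \<le> N a"
  using assms by (intro A_op_le) auto

lemma I_lc_contrapositive:
  assumes "N (N x) = x" and "N (N y) = y"
  shows "I_lc I N (N y) (N x) = I_lc I N x y"
  using assms unfolding I_lc_def by auto

lemma I_uc_contrapositive:
  assumes "N (N x) = x" and "N (N y) = y"
  shows "I_uc I N (N y) (N x) = I_uc I N x y"
  using assms unfolding I_uc_def by auto

theorem theorem5p11:
  fixes I :: "real \<Rightarrow> real \<Rightarrow> real" and N :: "real \<Rightarrow> real"
  assumes "fuzzy_implication I" and "strong_negation N"
    and "a \<in> {0..1}" and "b \<in> {0..1}"
  shows "A_op (I_lc I N) (N b) (I_lc I N a b) \<le> N a \<and>
         A_op (I_uc I N) (N b) (I_uc I N a b) \<le> N a"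
proof -
  have "N a \<in> {0..1}" and "N (N a) = a" and "N (N b) = b"
    using assms(2-4) unfolding strong_negation_def fuzzy_negation_def by auto
  then show ?thesis
    by (simp add: A_op_contrapositive_le I_lc_contrapositive I_uc_contrapositive)
qed

end
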